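(* In the setting described in the context, fix $i$ with $0\le w_i<1$ and $j\in\{1,\ldots,p\}$. Then \[ f_i^{(-j)}(x)=a_jx(1-x)^{p-2}+b_j(1-x)^{p-1},\qquad x\in[0,1], \] for some constants $a_j\ge0$ and $b_j\ge0$. If $f(\mathbf{w})>0$, then $f_i^{(-j)}(x)>0$ for all $x\in(0,1)$, which implies $a_j+b_j>0$. If $0<w_i<1$, then $b_j=f_i^{(-j)}(0)$ and $a_j=[f_{-j}(\mathbf{w})-b_j(1-w_i)^{p-1}]/[w_i(1-w_i)^{p-2}]$; if $w_i=0$, then $b_j=f_{-j}(\mathbf{w})$ and $a_j=2^{p-1}f_i^{(-j)}(1/2)-b_j$.
   Context: Let $m>p\ge2$. Given a model matrix $\mathbf{X}\in\mathbb{R}^{m\times p}$ (rows $\mathbf{q}(\mathbf{x}_i)^T$ for distinct design points under a generalized linear model) and numbers $\nu_1,\ldots,\nu_m\ge0$ (where $\nu_i=(\partial\mu_i/\partial\eta_i)^2/\mathrm{Var}(Y_i)$), for $\mathbf{w}=(w_1,\ldots,w_m)^T$ with $w_i\ge0$, $\sum_iw_i=1$, let $\mathbf{W}=\mathrm{diag}\{w_1\nu_1,\ldots,w_m\nu_m\}$, $f(\mathbf{w})=|\mathbf{X}^T\mathbf{W}\mathbf{X}|$, and $f_{-j}(\mathbf{w})=|\mathbf{X}_{-j}^T\mathbf{W}\mathbf{X}_{-j}|$, where $\mathbf{X}_{-j}$ is $\mathbf{X}$ with its $j$th column removed. Given $\mathbf{w}$ and $i$ with $0\le w_i<1$, for $x\in[0,1]$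 let $\mathbf{w}^{(i)}(x)=\big(\tfrac{1-x}{1-w_i}w_1,\ldots,\tfrac{1-x}{1-w_i}w_{i-1},x,\tfrac{1-x}{1-w_i}w_{i+1},\ldots,\tfrac{1-x}{1-w_i}w_m\big)^T$ and $f_i^{(-j)}(x)=f_{-j}(\mathbf{w}^{(i)}(x))$. *)

theory Defs
  imports "Jordan_Normal_Form.Determinant"
begin

(* Indices are 0-based: design points r < m, columns c < p. *)

definition del_col :: "real mat \<Rightarrow> nat \<Rightarrow> real mat" where
  "del_col X j = mat (dim_row X) (dim_col X - 1)
      (\<lambda>(r, c). X $$ (r, if c < j then c else Suc c))"

definition Wmat :: "nat \<Rightarrow> (nat \<Rightarrow> real) \<Rightarrow> (nat \<Rightarrow> real) \<Rightarrow> real mat" where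
  "Wmat m nu w = mat m m (\<lambda>(r, c). if r = c then w r * nu r else 0)"

definition fdet :: "real mat \<Rightarrow> (nat \<Rightarrow> real) \<Rightarrow> (nat \<Rightarrow> real) \<Rightarrow> real" where
  "fdet X nu w = det (transpose_mat X * Wmat (dim_row X) nu w * X)"

definition fminus :: "real mat \<Rightarrow> (nat \<Rightarrow> real) \<Rightarrow> nat \<Rightarrow> (nat \<Rightarrow> real) \<Rightarrow> real" where
  "fminus X nu j w = fdet (del_col X j) nu w"

definition wpath :: "(nat \<Rightarrow> real) \<Rightarrow> nat \<Rightarrow> real \<Rightarrow> nat \<Rightarrow> real" where
  "wpath w i x = (\<lambda>k. if k = i then x else (1 - x) / (1 - w i) * w k)"

definition fij :: "real mat \<Rightarrow> (nat \<Rightarrow> real) \<Rightarrow> (nat \<Rightarrow> real) \<Rightarrow> nat \<Rightarrow> nat \<Rightarrow> real \<Rightarrow> real" where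
  "fij X nu w i j x = fminus X nu j (wpath w i x)"

end

theory Submission
  imports Defs
begin

(* Along the path the weights are affine in x, w^(i)(x) = (1 - x) w^(i)(0) + x e_i, so the
   information matrix of X_{-j} is (1 - x) B + x nu_i y y^T with y the i-th row of X_{-j}.
   Multilinearity of the determinant in the rows turns this rank-one update into
   a x (1 - x)^(p-2) + b (1 - x)^(p-1).  A Gram matrix with nonnegative weights is positive
   semidefinite, so its determinant is nonnegative (deform it to the identity and apply the
   intermediate value theorem); hence the polynomial is nonnegative on [0,1], which forces
   a, b >= 0.  If f(w) > 0, a kernel vector of the weighted Gram matrix of X_{-j} would extend
   by a zero j-th coordinate to one of X, so f_{-j}(w) > 0; this is the polynomial at x = w_i. *)

lemma continuous_on_det:
  fixes A :: "real \<Rightarrow> real mat"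
  assumes carrier: "\<And>t. A t \<in> carrier_mat n n"
    and entries: "\<And>r s. r < n \<Longrightarrow> s < n \<Longrightarrow> continuous_on S (\<lambda>t. A t $$ (r, s))"
  shows "continuous_on S (\<lambda>t. det (A t))"
proof -
  have "continuous_on S (\<lambda>t. \<Sum>p\<in>{p. p permutes {0..<n}}. signof p * (\<Prod>i=0..<n. A t $$ (i, p i)))"
    by (intro continuous_on_sum continuous_on_mult continuous_on_const continuous_on_prod entries)
       (auto dest: permutes_in_image)
  then show ?thesis
    by (simp only: det_def'[OF carrier])
qed

lemma det_nonneg_if_psd:
  fixes A :: "real mat"
  assumes A: "A \<in> carrier_mat n n"
    and psd: "\<And>v. v \<in> carrier_vec n \<Longrightarrow> v \<bullet> (A *\<^sub>v v) \<ge> 0"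
  shows "det A \<ge> 0"
proof (rule ccontr)
  assume neg: "\<not> det A \<ge> 0"
  define H where "H t = (1 - t) \<cdot>\<^sub>m 1\<^sub>m n + t \<cdot>\<^sub>m A" for t :: real
  have H: "H t \<in> carrier_mat n n" for t
    using A by (simp add: H_def)
  have "det (H t) \<noteq> 0" if t: "0 \<le> t" "t < 1" for t
  proof
    assume "det (H t) = 0"
    then obtain v where v: "v \<in> carrier_vec n" "v \<noteq> 0\<^sub>v n" "H t *\<^sub>v v = 0\<^sub>v n"
      using det_0_iff_vec_prod_zero[OF H] by blast
    have smult: "(c \<cdot>\<^sub>m B) *\<^sub>v v = c \<cdot>\<^sub>v (B *\<^sub>v v)" if "B \<in> carrier_mat n n" for c B
      using that v(1) by (intro eq_vecI) auto
    have "H t *\<^sub>v v = (1 - t) \<cdot>\<^sub>v v + t \<cdot>\<^sub>v (A *\<^sub>v v)"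
      using A v(1) by (simp add: H_def add_mult_distrib_mat_vec[of _ n n] smult)
    then have "v \<bullet> (H t *\<^sub>v v) = (1 - t) * (v \<bullet> v) + t * (v \<bullet> (A *\<^sub>v v))"
      using A v(1) by (simp add: scalar_prod_add_distrib[of _ n])
    then have "0 = (1 - t) * (v \<bullet> v) + t * (v \<bullet> (A *\<^sub>v v))"
      using v by simp
    moreover have "v \<bullet> v > 0"
      using conjugate_square_greater_0_vec[OF v(1)] v(2) by simp
    ultimately show False
      using psd[OF v(1)] t by (smt (verit) mult_nonneg_nonneg mult_pos_pos)
  qed
  moreover have "continuous_on {0..1} (\<lambda>t. det (H t))"
    by (rule continuous_on_det[OF H])
       (use A in \<open>auto simp: H_def intro!: continuous_on_add continuous_on_mult continuous_on_diff\<close>)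
  moreover have "H 0 = 1\<^sub>m n" "H 1 = A"
    using A by (auto simp: H_def)
  ultimately show False
    using IVT2'[of "\<lambda>t. det (H t)" 1 0 0] neg by force
qed

lemma Wmat_carrier [simp]: "Wmat m nu w \<in> carrier_mat m m"
  and dim_row_Wmat [simp]: "dim_row (Wmat m nu w) = m"
  and dim_col_Wmat [simp]: "dim_col (Wmat m nu w) = m"
  by (simp_all add: Wmat_def)

lemma Wmat_mult_vec:
  assumes "u \<in> carrier_vec m"
  shows "Wmat m nu w *\<^sub>v u = vec m (\<lambda>k. w k * nu k * u $ k)"
proof (rule eq_vecI)
  fix k assume "k < dim_vec (vec m (\<lambda>k. w k * nu k * u $ k))"
  then have k: "k < m" by simp
  have "(Wmat m nu w *\<^sub>v u) $ k = (\<Sum>l<m. (if k = l then w k * nu k else 0) * u $ l)"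
    using assms k by (simp add: Wmat_def scalar_prod_def atLeast0LessThan)
  also have "\<dots> = (\<Sum>l<m. if l = k then w k * nu k * u $ l else 0)"
    by (intro sum.cong) auto
  also have "\<dots> = w k * nu k * u $ k"
    using k by simp
  finally show "(Wmat m nu w *\<^sub>v u) $ k = vec m (\<lambda>k. w k * nu k * u $ k) $ k"
    using k by simp
qed (use assms in simp)

lemma gram_mat_eq:
  assumes Y: "Y \<in> carrier_mat m n"
  shows "transpose_mat Y * Wmat m nu w * Y =
    mat n n (\<lambda>(r, s). \<Sum>k<m. w k * nu k * Y $$ (k, r) * Y $$ (k, s))"
proof -
  have "(Wmat m nu w * Y) $$ (k, s) = (Wmat m nu w *\<^sub>v col Y s) $ k" if "k < m" "s < n" for k s
    using Y that by simp
  then have "Wmat m nu w * Y = mat m n (\<lambda>(k, s). w k * nu k * Y $$ (k, s))"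
    using Y by (intro eq_matI) (auto simp: Wmat_mult_vec)
  then show ?thesis
    using Y by (intro eq_matI)
      (auto simp: assoc_mult_mat[of _ n m _ m _ n] scalar_prod_def atLeast0LessThan mult.assoc
        intro!: sum.cong)
qed

lemma gram_carrier:
  "Y \<in> carrier_mat m n \<Longrightarrow> transpose_mat Y * Wmat m nu w * Y \<in> carrier_mat n n"
  by (meson Wmat_carrier mult_carrier_mat transpose_carrier_mat)

lemma gram_mult_vec:
  assumes "Y \<in> carrier_mat m n" and "v \<in> carrier_vec n"
  shows "(transpose_mat Y * Wmat m nu w * Y) *\<^sub>v v =
    transpose_mat Y *\<^sub>v (Wmat m nu w *\<^sub>v (Y *\<^sub>v v))"
  using assms by (simp add: assoc_mult_mat_vec[of _ n m _ n] assoc_mult_mat_vec[of _ n m _ m])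

lemma gram_quadratic_form:
  assumes Y: "Y \<in> carrier_mat m n" and v: "v \<in> carrier_vec n"
  shows "v \<bullet> ((transpose_mat Y * Wmat m nu w * Y) *\<^sub>v v) = (\<Sum>k<m. w k * nu k * ((Y *\<^sub>v v) $ k)\<^sup>2)"
proof -
  define z where "z = Wmat m nu w *\<^sub>v (Y *\<^sub>v v)"
  have Yv: "Y *\<^sub>v v \<in> carrier_vec m" and z: "z \<in> carrier_vec m"
    using Y v unfolding z_def by (meson Wmat_carrier mult_mat_vec_carrier)+
  have "v \<bullet> ((transpose_mat Y * Wmat m nu w * Y) *\<^sub>v v) = v \<bullet> (transpose_mat Y *\<^sub>v z)"
    using Y v by (simp add: gram_mult_vec z_def)
  also have "\<dots> = (transpose_mat Y *\<^sub>v z) \<bullet> v"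
    using v mult_mat_vec_carrier[of "transpose_mat Y" n m z] Y z
    by (intro comm_scalar_prod[of _ n]) simp_all
  also have "\<dots> = z \<bullet> (Y *\<^sub>v v)"
    by (rule transpose_vec_mult_scalar[OF Y v z])
  also have "\<dots> = (Y *\<^sub>v v) \<bullet> z"
    using z Yv by (rule comm_scalar_prod)
  also have "\<dots> = (\<Sum>k<m. w k * nu k * ((Y *\<^sub>v v) $ k)\<^sup>2)"
    using Yv
    by (simp add: z_def Wmat_mult_vec scalar_prod_def atLeast0LessThan power2_eq_square ac_simps)
  finally show ?thesis .
qed

lemma det_gram_nonneg:
  assumes "Y \<in> carrier_mat m n"
    and "\<And>k. k < m \<Longrightarrow> w k * nu k \<ge> 0"
  shows "det (transpose_mat Y * Wmat m nu w * Y) \<ge> 0"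
  using assms
  by (intro det_nonneg_if_psd[of _ n]) (auto simp: gram_quadratic_form intro!: sum_nonneg)

lemma det_gram_eq_0_iff:
  assumes Y: "Y \<in> carrier_mat m n"
    and nonneg: "\<And>k. k < m \<Longrightarrow> w k * nu k \<ge> 0"
  shows "det (transpose_mat Y * Wmat m nu w * Y) = 0 \<longleftrightarrow>
    (\<exists>v \<in> carrier_vec n. v \<noteq> 0\<^sub>v n \<and> Wmat m nu w *\<^sub>v (Y *\<^sub>v v) = 0\<^sub>v m)"
    (is "det ?G = 0 \<longleftrightarrow> _")
proof
  assume "det ?G = 0"
  then obtain v where v: "v \<in> carrier_vec n" "v \<noteq> 0\<^sub>v n" "?G *\<^sub>v v = 0\<^sub>v n"
    using det_0_iff_vec_prod_zero[OF gram_carrier[OF Y]] by blast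
  then have "(\<Sum>k<m. w k * nu k * ((Y *\<^sub>v v) $ k)\<^sup>2) = 0"
    using gram_quadratic_form[OF Y v(1), where nu = nu and w = w] v(1) by simp
  then have "w k * nu k * ((Y *\<^sub>v v) $ k)\<^sup>2 = 0" if "k < m" for k
    using that nonneg by (subst (asm) sum_nonneg_eq_0_iff) auto
  then have "Wmat m nu w *\<^sub>v (Y *\<^sub>v v) = 0\<^sub>v m"
    using Y v(1) by (intro eq_vecI) (auto simp: Wmat_mult_vec power2_eq_square)
  then show "\<exists>v \<in> carrier_vec n. v \<noteq> 0\<^sub>v n \<and> Wmat m nu w *\<^sub>v (Y *\<^sub>v v) = 0\<^sub>v m"
    using v by blast
next
  assume "\<exists>v \<in> carrier_vec n. v \<noteq> 0\<^sub>v n \<and> Wmat m nu w *\<^sub>v (Y *\<^sub>v v) = 0\<^sub>v m"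
  then obtain v where v: "v \<in> carrier_vec n" "v \<noteq> 0\<^sub>v n" "Wmat m nu w *\<^sub>v (Y *\<^sub>v v) = 0\<^sub>v m"
    by blast
  then have "?G *\<^sub>v v = 0\<^sub>v n"
    using Y by (intro eq_vecI) (auto simp: gram_mult_vec)
  then show "det ?G = 0"
    using det_0_iff_vec_prod_zero[OF gram_carrier[OF Y]] v by auto
qed

lemma sum_lessThan_Suc_skip:
  fixes g :: "nat \<Rightarrow> 'a::comm_monoid_add"
  assumes "j < Suc n"
  shows "(\<Sum>c<Suc n. g c) = g j + (\<Sum>r<n. g (if r < j then r else Suc r))"
proof -
  have "bij_betw (\<lambda>r. if r < j then r else Suc r) {..<n} ({..<Suc n} - {j})"
    by (rule bij_betw_byWitness[where f' = "\<lambda>c. if c < j then c else c - 1"]) (use assms in auto)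
  then have "(\<Sum>r<n. g (if r < j then r else Suc r)) = (\<Sum>c\<in>{..<Suc n} - {j}. g c)"
    by (rule sum.reindex_bij_betw)
  moreover have "(\<Sum>c<Suc n. g c) = g j + (\<Sum>c\<in>{..<Suc n} - {j}. g c)"
    using assms by (intro sum.remove) auto
  ultimately show ?thesis
    by simp
qed

definition vec_insert_zero :: "nat \<Rightarrow> 'a::zero vec \<Rightarrow> 'a vec" where
  "vec_insert_zero j v =
    vec (Suc (dim_vec v)) (\<lambda>c. if c < j then v $ c else if c = j then 0 else v $ (c - 1))"

lemma vec_insert_zero_carrier: "v \<in> carrier_vec n \<Longrightarrow> vec_insert_zero j v \<in> carrier_vec (Suc n)"
  by (simp add: vec_insert_zero_def)

lemma vec_insert_zero_eq_0_iff:
  assumes "v \<in> carrier_vec n" and "j \<le> n"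
  shows "vec_insert_zero j v = 0\<^sub>v (Suc n) \<longleftrightarrow> v = 0\<^sub>v n"
proof
  assume zero: "vec_insert_zero j v = 0\<^sub>v (Suc n)"
  show "v = 0\<^sub>v n"
  proof (rule eq_vecI)
    fix r assume "r < dim_vec (0\<^sub>v n :: 'a vec)"
    then have "vec_insert_zero j v $ (if r < j then r else Suc r) = 0"
      using zero by simp
    then show "v $ r = 0\<^sub>v n $ r"
      using assms \<open>r < _\<close> by (auto simp: vec_insert_zero_def split: if_splits)
  qed (use assms in simp)
qed (use assms in \<open>auto simp: vec_insert_zero_def\<close>)

lemma del_col_carrier: "X \<in> carrier_mat m p \<Longrightarrow> del_col X j \<in> carrier_mat m (p - 1)"
  by (simp add: del_col_def)

lemma del_col_mult_vec:
  assumes X: "X \<in> carrier_mat m (Suc n)" and j: "j < Suc n" and v: "v \<in> carrier_vec n"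
  shows "del_col X j *\<^sub>v v = X *\<^sub>v vec_insert_zero j v"
proof (rule eq_vecI)
  fix k assume "k < dim_vec (X *\<^sub>v vec_insert_zero j v)"
  then have k: "k < m"
    using X by simp
  have "(X *\<^sub>v vec_insert_zero j v) $ k = (\<Sum>c<Suc n. X $$ (k, c) * vec_insert_zero j v $ c)"
    using X v k by (simp add: scalar_prod_def atLeast0LessThan vec_insert_zero_def)
  also have "\<dots> = (\<Sum>r<n. X $$ (k, if r < j then r else Suc r) * v $ r)"
    using v j
    by (subst sum_lessThan_Suc_skip[OF j]) (auto simp: vec_insert_zero_def intro!: sum.cong)
  also have "\<dots> = (del_col X j *\<^sub>v v) $ k"
    using X v k by (simp add: del_col_def scalar_prod_def atLeast0LessThan)
  finally show "(del_col X j *\<^sub>v v) $ k = (X *\<^sub>v vec_insert_zero j v) $ k" ..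
qed (use X in \<open>simp add: del_col_def\<close>)

lemma fminus_pos:
  assumes X: "X \<in> carrier_mat m p" and j: "j < p"
    and nonneg: "\<And>k. k < m \<Longrightarrow> w k * nu k \<ge> 0"
    and pos: "fdet X nu w > 0"
  shows "fminus X nu j w > 0"
proof -
  have Y: "del_col X j \<in> carrier_mat m (p - 1)"
    using X by (rule del_col_carrier)
  have X': "X \<in> carrier_mat m (Suc (p - 1))" and j': "j < Suc (p - 1)"
    using X j by simp_all
  have "fminus X nu j w \<noteq> 0"
  proof
    assume "fminus X nu j w = 0"
    then obtain v where v: "v \<in> carrier_vec (p - 1)" "v \<noteq> 0\<^sub>v (p - 1)"
        and kernel: "Wmat m nu w *\<^sub>v (del_col X j *\<^sub>v v) = 0\<^sub>v m"
      using det_gram_eq_0_iff[OF Y nonneg] Y by (auto simp: fminus_def fdet_def)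
    have "vec_insert_zero j v \<in> carrier_vec (Suc (p - 1))" "vec_insert_zero j v \<noteq> 0\<^sub>v (Suc (p - 1))"
      using v j' by (simp_all add: vec_insert_zero_carrier vec_insert_zero_eq_0_iff)
    then have "fdet X nu w = 0"
      using det_gram_eq_0_iff[OF X' nonneg] kernel X' unfolding del_col_mult_vec[OF X' j' v(1)]
      by (auto simp: fdet_def)
    then show False
      using pos by simp
  qed
  then show ?thesis
    using det_gram_nonneg[of "del_col X j" m "p - 1" w nu, OF Y nonneg] Y
    by (simp add: fminus_def fdet_def)
qed

lemma det_smult_row:
  fixes f :: "nat \<Rightarrow> 'a::comm_ring_1 vec"
  assumes f: "\<And>i. i < n \<Longrightarrow> f i \<in> carrier_vec n" and g: "g \<in> carrier_vec n" and k: "k < n"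
  shows "det (mat\<^sub>r n n (\<lambda>i. if i = k then a \<cdot>\<^sub>v g else f i)) =
    a * det (mat\<^sub>r n n (\<lambda>i. if i = k then g else f i))"
proof -
  have "mat\<^sub>r n n (\<lambda>i. if i = k then a \<cdot>\<^sub>v g else f i) =
      multrow k a (mat\<^sub>r n n (\<lambda>i. if i = k then g else f i))"
    by (rule eq_matI) (use f g in auto)
  then show ?thesis
    using det_multrow[OF k, of "mat\<^sub>r n n (\<lambda>i. if i = k then g else f i)" a] by simp
qed

lemma det_rows_scale_add_common:
  fixes c :: "nat \<Rightarrow> 'a::comm_ring_1 vec"
  assumes K: "K \<subseteq> {0..<n}" and y: "y \<in> carrier_vec n"
  shows "(\<And>i. i < n \<Longrightarrow> c i \<in> carrier_vec n) \<Longrightarrow>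
    det (mat\<^sub>r n n (\<lambda>i. if i \<in> K then \<alpha> \<cdot>\<^sub>v c i + t i \<cdot>\<^sub>v y else c i)) =
    \<alpha> ^ card K * det (mat\<^sub>r n n c) +
    \<alpha> ^ (card K - 1) * (\<Sum>k\<in>K. t k * det (mat\<^sub>r n n (\<lambda>i. if i = k then y else c i)))"
  using finite_subset[OF K finite_atLeastLessThan] K
proof (induction K arbitrary: c rule: finite_induct)
  case empty
  then show ?case by simp
next
  case (insert k F c)
  have k: "k < n" and F: "F \<subseteq> {0..<n}"
    using insert.prems by auto
  note c = insert.prems(1)
  define R where "R i = (if i \<in> F then \<alpha> \<cdot>\<^sub>v c i + t i \<cdot>\<^sub>v y else c i)" for i
  have R: "R i \<in> carrier_vec n" if "i < n" for i
    using c[OF that] y by (auto simp: R_def)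
  let ?ck = "\<lambda>i. if i = k then y else c i"
  have ck: "?ck i \<in> carrier_vec n" if "i < n" for i
    using c[OF that] y by auto
  have "det (mat\<^sub>r n n (\<lambda>i. if i \<in> insert k F then \<alpha> \<cdot>\<^sub>v c i + t i \<cdot>\<^sub>v y else c i)) =
      det (mat\<^sub>r n n (\<lambda>i. if i = k then \<alpha> \<cdot>\<^sub>v c k else R i)) +
      det (mat\<^sub>r n n (\<lambda>i. if i = k then t k \<cdot>\<^sub>v y else R i))"
  proof -
    have "(\<lambda>i. if i \<in> insert k F then \<alpha> \<cdot>\<^sub>v c i + t i \<cdot>\<^sub>v y else c i) =
        (\<lambda>i. if i = k then \<alpha> \<cdot>\<^sub>v c k + t k \<cdot>\<^sub>v y else R i)"
      by (auto simp: R_def)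
    then show ?thesis
      using det_row_add[of "\<lambda>_. \<alpha> \<cdot>\<^sub>v c k" k n "\<lambda>_. t k \<cdot>\<^sub>v y" R] c[OF k] y R k by simp
  qed
  also have "det (mat\<^sub>r n n (\<lambda>i. if i = k then \<alpha> \<cdot>\<^sub>v c k else R i)) =
      \<alpha> * det (mat\<^sub>r n n (\<lambda>i. if i \<in> F then \<alpha> \<cdot>\<^sub>v c i + t i \<cdot>\<^sub>v y else c i))"
  proof -
    have "(\<lambda>i. if i = k then c k else R i) = (\<lambda>i. if i \<in> F then \<alpha> \<cdot>\<^sub>v c i + t i \<cdot>\<^sub>v y else c i)"
      using insert.hyps(2) by (auto simp: R_def)
    then show ?thesis
      using det_smult_row[OF R c[OF k] k, where a = \<alpha>] by simp
  qed
  also have "det (mat\<^sub>r n n (\<lambda>i. if i = k then t k \<cdot>\<^sub>v y else R i)) =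
      t k * det (mat\<^sub>r n n (\<lambda>i. if i \<in> F then \<alpha> \<cdot>\<^sub>v ?ck i + t i \<cdot>\<^sub>v y else ?ck i))"
  proof -
    have "(\<lambda>i. if i = k then y else R i) = (\<lambda>i. if i \<in> F then \<alpha> \<cdot>\<^sub>v ?ck i + t i \<cdot>\<^sub>v y else ?ck i)"
      using insert.hyps(2) by (auto simp: R_def)
    then show ?thesis
      using det_smult_row[OF R y k, where a = "t k"] by simp
  qed
  also have "det (mat\<^sub>r n n (\<lambda>i. if i \<in> F then \<alpha> \<cdot>\<^sub>v ?ck i + t i \<cdot>\<^sub>v y else ?ck i)) =
      \<alpha> ^ card F * det (mat\<^sub>r n n ?ck)"
  proof -
    have "det (mat\<^sub>r n n (\<lambda>i. if i = f then y else ?ck i)) = 0" if "f \<in> F" for f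
      using that insert.hyps(2) F k y ck by (intro det_identical_rows[of _ n f k]) auto
    then show ?thesis
      using insert.IH[OF ck F] by simp
  qed
  finally show ?case
    using insert.IH[OF c F] insert.hyps
    by (cases "F = {}") (auto simp: algebra_simps power_eq_if)
qed

lemma det_scale_add_rank_one:
  fixes B :: "'a::comm_ring_1 mat"
  assumes B: "B \<in> carrier_mat n n" and y: "y \<in> carrier_vec n"
  shows "det (mat n n (\<lambda>(r, s). \<alpha> * B $$ (r, s) + t * y $ r * y $ s)) =
    \<alpha> ^ n * det B +
    \<alpha> ^ (n - 1) * t * (\<Sum>k<n. y $ k * det (mat\<^sub>r n n (\<lambda>r. if r = k then y else row B r)))"
proof -
  have "mat n n (\<lambda>(r, s). \<alpha> * B $$ (r, s) + t * y $ r * y $ s) =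
      mat\<^sub>r n n (\<lambda>r. if r \<in> {0..<n} then \<alpha> \<cdot>\<^sub>v row B r + (t * y $ r) \<cdot>\<^sub>v y else row B r)"
    using B y by (intro eq_matI) auto
  moreover have "mat\<^sub>r n n (row B) = B"
    using B by (intro eq_matI) auto
  ultimately show ?thesis
    using det_rows_scale_add_common[of "{0..<n}" n y "row B" \<alpha> "\<lambda>r. t * y $ r"] B y
    by (simp add: atLeast0LessThan sum_distrib_left ac_simps)
qed

lemma wpath_split: "wpath w i x k = (1 - x) * wpath w i 0 k + (if k = i then x else 0)"
  by (simp add: wpath_def)

lemma wpath_self: "w i \<noteq> 1 \<Longrightarrow> wpath w i (w i) = w"
  by (auto simp: wpath_def)

lemma wpath_nonneg: "0 \<le> x \<Longrightarrow> x \<le> 1 \<Longrightarrow> w i < 1 \<Longrightarrow> 0 \<le> w k \<Longrightarrow> 0 \<le> wpath w i x k"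
  by (simp add: wpath_def)

lemma fij_nonneg:
  assumes "X \<in> carrier_mat m p" and "x \<in> {0..1}" and "w i < 1"
    and "\<And>k. k < m \<Longrightarrow> w k \<ge> 0" and "\<And>k. k < m \<Longrightarrow> nu k \<ge> 0"
  shows "fij X nu w i j x \<ge> 0"
proof -
  have Y: "del_col X j \<in> carrier_mat m (p - 1)"
    using assms(1) by (rule del_col_carrier)
  have "0 \<le> det (transpose_mat (del_col X j) * Wmat m nu (wpath w i x) * del_col X j)"
    using assms by (intro det_gram_nonneg[OF Y] mult_nonneg_nonneg wpath_nonneg) auto
  then show ?thesis
    using Y by (simp add: fij_def fminus_def fdet_def)
qed

lemma gram_wpath_eq:
  assumes Y: "Y \<in> carrier_mat m n" and i: "i < m"
  shows "transpose_mat Y * Wmat m nu (wpath w i x) * Y =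
    mat n n (\<lambda>(r, s). (1 - x) * (transpose_mat Y * Wmat m nu (wpath w i 0) * Y) $$ (r, s) +
      (x * nu i) * row Y i $ r * row Y i $ s)"
proof -
  have "(\<Sum>k<m. wpath w i x k * nu k * Y $$ (k, r) * Y $$ (k, s)) =
      (1 - x) * (\<Sum>k<m. wpath w i 0 k * nu k * Y $$ (k, r) * Y $$ (k, s)) +
      (x * nu i) * Y $$ (i, r) * Y $$ (i, s)" for r s
  proof -
    have "(\<Sum>k<m. wpath w i x k * nu k * Y $$ (k, r) * Y $$ (k, s)) =
        (\<Sum>k<m. (1 - x) * (wpath w i 0 k * nu k * Y $$ (k, r) * Y $$ (k, s)) +
          (if k = i then x * nu i * Y $$ (i, r) * Y $$ (i, s) else 0))"
      by (intro sum.cong) (auto simp: wpath_split[of w i x] algebra_simps)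
    then show ?thesis
      using i by (simp add: sum.distrib sum_distrib_left)
  qed
  then show ?thesis
    using Y i by (intro eq_matI) (auto simp: gram_mat_eq)
qed

lemma fij_polynomial:
  assumes X: "X \<in> carrier_mat m p" and i: "i < m"
  shows "\<exists>a b. \<forall>x. fij X nu w i j x = a * x * (1 - x) ^ (p - 2) + b * (1 - x) ^ (p - 1)"
proof -
  define Y where "Y = del_col X j"
  define B where "B = transpose_mat Y * Wmat m nu (wpath w i 0) * Y"
  define y where "y = row Y i"
  define a where
    "a = nu i * (\<Sum>k<p - 1. y $ k * det (mat\<^sub>r (p - 1) (p - 1) (\<lambda>r. if r = k then y else row B r)))"
  have Y: "Y \<in> carrier_mat m (p - 1)"
    using del_col_carrier[OF X] by (simp add: Y_def)
  have B: "B \<in> carrier_mat (p - 1) (p - 1)"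
    using Y by (simp add: B_def gram_carrier)
  have y: "y \<in> carrier_vec (p - 1)"
    using Y i by (simp add: y_def)
  have "fij X nu w i j x = det (transpose_mat Y * Wmat m nu (wpath w i x) * Y)" for x
    using Y by (simp add: fij_def fminus_def fdet_def Y_def)
  moreover have "transpose_mat Y * Wmat m nu (wpath w i x) * Y =
      mat (p - 1) (p - 1) (\<lambda>(r, s). (1 - x) * B $$ (r, s) + (x * nu i) * y $ r * y $ s)" for x
    unfolding B_def y_def by (rule gram_wpath_eq[OF Y i])
  ultimately have "fij X nu w i j x = a * x * (1 - x) ^ (p - 2) + det B * (1 - x) ^ (p - 1)" for x
    using det_scale_add_rank_one[OF B y, of "1 - x" "x * nu i"]
    by (simp add: a_def numeral_2_eq_2 algebra_simps)
  then show ?thesis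
    by blast
qed

lemma coeffs_nonneg_if_nonneg_on_unit_interval:
  fixes a b :: real
  assumes nonneg: "\<And>x. x \<in> {0..1} \<Longrightarrow> 0 \<le> a * x * (1 - x) ^ n + b * (1 - x) ^ Suc n"
  shows "0 \<le> a" and "0 \<le> b"
proof -
  show "0 \<le> b"
    using nonneg[of 0] by simp
  have "0 \<le> a * x + b * (1 - x)" if "x \<in> {0<..<1}" for x
  proof -
    have "0 \<le> (1 - x) ^ n * (a * x + b * (1 - x))"
      using nonneg[of x] that by (simp add: algebra_simps)
    moreover have "0 < (1 - x) ^ n"
      using that by simp
    ultimately show ?thesis
      by (simp add: zero_le_mult_iff)
  qed
  then have "\<forall>\<^sub>F x in at_left 1. 0 \<le> a * x + b * (1 - x)"
    using eventually_at_left_real[of 0 1] by (auto elim: eventually_mono)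
  moreover have "((\<lambda>x. a * x + b * (1 - x)) \<longlongrightarrow> a) (at_left 1)"
    by (auto intro!: tendsto_eq_intros)
  ultimately show "0 \<le> a"
    by (intro tendsto_lowerbound) auto
qed

lemma pos_on_open_unit_interval_if_coeffs_nonneg:
  fixes a b x :: real
  assumes "0 \<le> a" "0 \<le> b" "0 < a + b" and "0 < x" "x < 1"
  shows "0 < a * x * (1 - x) ^ n + b * (1 - x) ^ Suc n"
proof -
  have "0 < a * x + b * (1 - x)"
    using assms by (cases "a = 0") (auto intro: add_pos_nonneg add_nonneg_pos)
  moreover have "a * x * (1 - x) ^ n + b * (1 - x) ^ Suc n = (1 - x) ^ n * (a * x + b * (1 - x))"
    by (simp add: algebra_simps)
  ultimately show ?thesis
    using assms by simp
qed

theorem lemma4: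
  fixes X :: "real mat" and m p i j :: nat and nu w :: "nat \<Rightarrow> real"
  assumes "p \<ge> 2" and "m > p"
    and "X \<in> carrier_mat m p"
    and "\<And>r. r < m \<Longrightarrow> nu r \<ge> 0"
    and "\<And>r. r < m \<Longrightarrow> w r \<ge> 0"
    and "(\<Sum>r<m. w r) = 1"
    and "i < m" and "w i < 1"
    and "j < p"
  shows "\<exists>a b. a \<ge> 0 \<and> b \<ge> 0 \<and>
      (\<forall>x\<in>{0..1}. fij X nu w i j x = a * x * (1 - x) ^ (p - 2) + b * (1 - x) ^ (p - 1)) \<and>
      (fdet X nu w > 0 \<longrightarrow> (\<forall>x\<in>{0<..<1}. fij X nu w i j x > 0) \<and> a + b > 0) \<and>
      (0 < w i \<longrightarrow> b = fij X nu w i j 0 \<and>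
          a = (fminus X nu j w - b * (1 - w i) ^ (p - 1)) / (w i * (1 - w i) ^ (p - 2))) \<and>
      (w i = 0 \<longrightarrow> b = fminus X nu j w \<and>
          a = 2 ^ (p - 1) * fij X nu w i j (1/2) - b)"
proof -
  note X = assms(3) and nu = assms(4) and w = assms(5) and i = assms(7-8) and j = assms(9)
  obtain a b where f: "\<And>x. fij X nu w i j x = a * x * (1 - x) ^ (p - 2) + b * (1 - x) ^ (p - 1)"
    using fij_polynomial[OF X i(1)] by blast
  have p: "p - 1 = Suc (p - 2)"
    using assms(1) by simp
  have f': "fij X nu w i j x = a * x * (1 - x) ^ (p - 2) + b * (1 - x) ^ Suc (p - 2)" for x
    using f[of x] by (simp only: p)
  have "0 \<le> fij X nu w i j x" if "x \<in> {0..1}" for x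
    by (rule fij_nonneg[OF X that]) (use i w nu in auto)
  then have ab: "0 \<le> a" "0 \<le> b"
    using coeffs_nonneg_if_nonneg_on_unit_interval[of a "p - 2" b] f' by auto
  have fw: "fminus X nu j w = fij X nu w i j (w i)"
    using wpath_self[of w i] i(2) by (simp add: fij_def)
  have pos: "(\<forall>x\<in>{0<..<1}. fij X nu w i j x > 0) \<and> a + b > 0" if "fdet X nu w > 0"
  proof -
    have "0 < fij X nu w i j (w i)"
      using fminus_pos[OF X j _ that] w nu fw by simp
    then have "a + b > 0"
      using ab f[of "w i"] by (cases "a = 0 \<and> b = 0") auto
    then show ?thesis
      using ab f' pos_on_open_unit_interval_if_coeffs_nonneg by simp
  qed
  have interior: "b = fij X nu w i j 0 \<and>
      a = (fminus X nu j w - b * (1 - w i) ^ (p - 1)) / (w i * (1 - w i) ^ (p - 2))" if "0 < w i"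
    using that i(2) fw f[of 0] f[of "w i"] by (simp add: field_simps)
  have boundary: "b = fminus X nu j w \<and> a = 2 ^ (p - 1) * fij X nu w i j (1/2) - b" if "w i = 0"
    using that fw f[of 0] f'[of "1/2"] unfolding p by (simp add: field_simps)
  have poly: "\<forall>x\<in>{0..1}. fij X nu w i j x = a * x * (1 - x) ^ (p - 2) + b * (1 - x) ^ (p - 1)"
    by (simp add: f)
  show ?thesis
    by (rule exI[of _ a], rule exI[of _ b]) (use ab pos interior boundary poly in blast)
qed

end
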